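(* Let $x$ be a fixed real (or complex) number and let $\kappa_x:\mathbb{Z}_{>0}\to\mathbb{C}$ be the recursive divisor function defined by $$\kappa_x(n) = n^x + \sum_{d \mid n,\ d<n} \kappa_x(d)\qquad (n\ge 1).$$ Then, as an identity of Dirichlet series in $s$ (in particular for all complex $s$ with real part sufficiently large that both sides converge absolutely), $$\sum_{n=1}^\infty \frac{\kappa_x(n)}{n^s} = \frac{\zeta(s-x)}{2-\zeta(s)},$$ where $\zeta$ is the Riemann zeta function.
   Context: For $n=1$ the sum over $d\mid n$, $d<n$ is empty, so $\kappa_x(1)=1$. $\zeta(s)=\sum_{n\ge1} n^{-s}$. *)

theory Defs
  imports "HOL-Analysis.Analysis"
begin

text \<open>For n \<ge> 1, d ranges over {..<n} with d dvd n; d = 0 never divides n \<ge> 1.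
  The value at n = 0 is irrelevant (it is 0).\<close>
function kappa :: "complex \<Rightarrow> nat \<Rightarrow> complex" where
  "kappa x n = (if n = 0 then 0
     else of_nat n powr x + (\<Sum>d<n. if d dvd n then kappa x d else 0))"
  by auto
termination by (relation "Wellfounded.measure snd") auto

text \<open>Riemann zeta function via its Dirichlet series (valid for Re s > 1, which is the
  only region used below).\<close>
definition zeta :: "complex \<Rightarrow> complex" where
  "zeta s = (\<Sum>n. 1 / of_nat (Suc n) powr s)"

end

theory Submission
  imports Defs
begin

(* Put a(n) = kappa x n / n^s and K = (SUM n. a n). The recursion says that the Dirichlet
   convolution of kappa x with the constant function 1 is 2 kappa x n - n^x, so multiplying
   the series K by zeta s gives K zeta(s) = 2 K - zeta(s - x).
   Absolute convergence for large Re s comes from the bound |kappa x n| <= n^A with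
   A = max 3 (Re x + 1), proved by strong induction: over the proper divisors d = n/k of n,
   (SUM d^A) = n^A (SUM k^-A) <= n^A (zeta A - 1) <= n^A / 2, while n^(Re x) <= n^A / 2 for n >= 2.
   The same tail estimate gives |zeta s - 1| <= 1/2 for Re s >= 3, so 2 - zeta s is nonzero. *)

lemma has_sum_mult_Times:
  fixes f g :: "_ \<Rightarrow> complex"
  assumes f: "(f has_sum S) A" and g: "(g has_sum T) B"
  shows "((\<lambda>(x, y). f x * g y) has_sum (S * T)) (A \<times> B)"
proof -
  have "(\<lambda>(x, y). norm (f x * g y)) summable_on A \<times> B"
  proof (rule summable_on_SigmaI)
    fix x
    have "(\<lambda>y. norm (g y)) summable_on B"
      using g by (simp add: has_sum_imp_summable flip: summable_on_iff_abs_summable_on_complex)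
    then show "((\<lambda>y. case (x, y) of (x, y) \<Rightarrow> norm (f x * g y)) has_sum
                norm (f x) * infsum (\<lambda>y. norm (g y)) B) B"
      unfolding norm_mult prod.case by (intro has_sum_cmult_right) (simp add: summable_iff_has_sum_infsum)
  next
    show "(\<lambda>x. norm (f x) * infsum (\<lambda>y. norm (g y)) B) summable_on A"
      using f by (intro summable_on_cmult_left)
        (simp add: has_sum_imp_summable flip: summable_on_iff_abs_summable_on_complex)
  qed auto
  then obtain U where U: "((\<lambda>(x, y). f x * g y) has_sum U) (A \<times> B)"
    using summable_on_iff_abs_summable_on_complex[of "\<lambda>(x, y). f x * g y"]
    by (auto simp: summable_on_def case_prod_unfold)
  have "((\<lambda>x. f x * T) has_sum U) A"
    by (rule has_sum_Sigma'[OF U]) (use g in \<open>auto intro: has_sum_cmult_right\<close>)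
  moreover have "((\<lambda>x. f x * T) has_sum (S * T)) A"
    using f by (rule has_sum_cmult_left)
  ultimately show ?thesis
    using U has_sum_unique by metis
qed

lemma has_sum_dirichlet_prod:
  fixes f g :: "nat \<Rightarrow> complex"
  assumes "(f has_sum S) {0<..}" and "(g has_sum T) {0<..}"
  shows "((\<lambda>n. \<Sum>d | d dvd n. f d * g (n div d)) has_sum (S * T)) {0<..}"
proof -
  let ?P = "{0<..} :: nat set"
  have "((\<lambda>(d, m). f d * g m) has_sum (S * T)) (?P \<times> ?P)"
    using assms by (rule has_sum_mult_Times)
  also have "?this \<longleftrightarrow> ((\<lambda>(n, d). f d * g (n div d)) has_sum (S * T)) (Sigma ?P (\<lambda>n. {d. d dvd n}))"
    by (rule has_sum_reindex_bij_witness[where j = "\<lambda>(d, m). (d * m, d)" and i = "\<lambda>(n, d). (d, n div d)"])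
      (auto intro!: Nat.gr0I)
  finally show ?thesis
  proof (rule has_sum_Sigma')
    fix n :: nat
    assume "n \<in> ?P"
    then show "((\<lambda>d. case (n, d) of (n, d) \<Rightarrow> f d * g (n div d)) has_sum
                 (\<Sum>d | d dvd n. f d * g (n div d))) {d. d dvd n}"
      by (auto intro: has_sum_finite finite_divisors_nat)
  qed
qed

lemma norm_of_nat_powr: "norm ((of_nat n :: complex) powr s) = real n powr Re s"
  by (simp add: norm_powr_real_powr)

lemma sum_inverse_mult_pred_telescope:
  "N \<ge> 1 \<Longrightarrow> (\<Sum>k=2..N. 1 / (real k * (real k - 1))) = 1 - 1 / real N"
proof (induction N rule: nat_induct_at_least)
  case (Suc N)
  then have "{2..Suc N} = insert (Suc N) {2..N}"
    by auto
  then have "(\<Sum>k=2..Suc N. 1 / (real k * (real k - 1))) = 1 / (real (Suc N) * real N) + (1 - 1 / real N)"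
    using Suc by simp
  also have "\<dots> = 1 - 1 / real (Suc N)"
    using Suc.hyps by (simp add: field_simps add_nonneg_eq_0_iff)
  finally show ?case .
qed simp

lemma powr_neg_le_inverse_mult_pred:
  fixes k A :: real
  assumes "2 \<le> k" and "3 \<le> A"
  shows "k powr (-A) \<le> 1 / 2 * (1 / (k * (k - 1)))"
proof -
  have "k ^ 3 - 2 * (k * (k - 1)) = k * ((k - 1)\<^sup>2 + 1)"
    by (simp add: power2_eq_square power3_eq_cube algebra_simps)
  moreover have "0 \<le> k * ((k - 1)\<^sup>2 + 1)"
    using assms(1) by simp
  ultimately have "2 * (k * (k - 1)) \<le> k ^ 3"
    by linarith
  also have "\<dots> = k powr 3"
    using assms(1) by (simp add: powr_realpow)
  also have "\<dots> \<le> k powr A"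
    using assms by (intro powr_mono) auto
  finally show ?thesis
    using assms(1) by (simp add: powr_minus_divide divide_simps)
qed

lemma sum_powr_neg_le_half:
  fixes K :: "nat set" and A :: real
  assumes "finite K" and "K \<subseteq> {2..}" and "3 \<le> A"
  shows "(\<Sum>k\<in>K. real k powr (-A)) \<le> 1 / 2"
proof -
  define N where "N = Max (insert 1 K)"
  have "N \<ge> 1" and "K \<subseteq> {2..N}"
    using assms(1,2) by (auto simp: N_def)
  then have "(\<Sum>k\<in>K. real k powr (-A)) \<le> (\<Sum>k=2..N. real k powr (-A))"
    by (intro sum_mono2) auto
  also have "\<dots> \<le> (\<Sum>k=2..N. 1 / 2 * (1 / (real k * (real k - 1))))"
    using assms(3) by (intro sum_mono powr_neg_le_inverse_mult_pred) auto
  also have "\<dots> = 1 / 2 * (1 - 1 / real N)"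
    using \<open>N \<ge> 1\<close> by (simp only: sum_distrib_left [symmetric] sum_inverse_mult_pred_telescope)
  also have "\<dots> \<le> 1 / 2"
    by simp
  finally show ?thesis .
qed

lemma sum_proper_divisors_powr_le:
  fixes A :: real
  assumes "3 \<le> A" and "n > 0"
  shows "(\<Sum>d | d dvd n \<and> d < n. real d powr A) \<le> real n powr A / 2"
proof -
  have "(\<Sum>d | d dvd n \<and> d < n. real d powr A) = (\<Sum>k | k dvd n \<and> 1 < k. real (n div k) powr A)"
    by (rule sum.reindex_bij_witness[where i = "\<lambda>d. n div d" and j = "\<lambda>k. n div k"])
      (use assms(2) in \<open>auto elim!: dvdE intro!: Nat.gr0I\<close>)
  also have "\<dots> = real n powr A * (\<Sum>k | k dvd n \<and> 1 < k. real k powr (-A))"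
    unfolding sum_distrib_left
    by (intro sum.cong refl) (auto elim!: dvdE simp: powr_mult powr_minus field_simps)
  also have "\<dots> \<le> real n powr A * (1 / 2)"
    using assms by (intro mult_left_mono sum_powr_neg_le_half) auto
  finally show ?thesis
    by simp
qed

declare kappa.simps [simp del]

lemma kappa_eq:
  "n > 0 \<Longrightarrow> kappa x n = of_nat n powr x + (\<Sum>d | d dvd n \<and> d < n. kappa x d)"
  by (subst kappa.simps) (simp add: sum.inter_filter [symmetric] conj_commute lessThan_def)

lemma kappa_one: "kappa x 1 = 1"
  by (subst kappa.simps) simp

lemma sum_divisors_kappa:
  assumes "n > 0"
  shows "(\<Sum>d | d dvd n. kappa x d) = 2 * kappa x n - of_nat n powr x"
proof -
  have "{d. d dvd n} = insert n {d. d dvd n \<and> d < n}"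
    using assms by (auto dest: dvd_imp_le)
  then show ?thesis
    using kappa_eq[OF assms, of x] by simp
qed

lemma norm_kappa_le:
  assumes "3 \<le> A" and "Re x + 1 \<le> A"
  shows "norm (kappa x n) \<le> real n powr A"
proof (induction n rule: less_induct)
  case (less n)
  consider "n = 0" | "n = 1" | "n \<ge> 2"
    by linarith
  then show ?case
  proof cases
    case 1
    then show ?thesis by (simp add: kappa.simps)
  next
    case 2
    then show ?thesis
      using kappa_one[of x] by simp
  next
    case 3
    have "real n powr Re x * 2 \<le> real n powr Re x * real n powr (A - Re x)"
      using 3 assms(2) by (intro mult_left_mono) (auto intro: order.trans [OF _ powr_mono, of _ "real n" 1])
    then have pow: "real n powr Re x \<le> real n powr A / 2"
      by (simp flip: powr_add)
    have "norm (kappa x n) = norm (of_nat n powr x + (\<Sum>d | d dvd n \<and> d < n. kappa x d))"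
      using 3 by (simp add: kappa_eq)
    also have "\<dots> \<le> real n powr Re x + (\<Sum>d | d dvd n \<and> d < n. norm (kappa x d))"
      by (rule order.trans [OF norm_triangle_ineq add_mono]) (simp_all add: norm_of_nat_powr norm_sum)
    also have "\<dots> \<le> real n powr Re x + (\<Sum>d | d dvd n \<and> d < n. real d powr A)"
      by (intro add_left_mono sum_mono less.IH) auto
    also have "\<dots> \<le> real n powr A"
      using pow sum_proper_divisors_powr_le [OF assms(1), of n] 3 by simp
    finally show ?thesis .
  qed
qed

lemma norm_summable_Suc_imp_has_sum:
  fixes f :: "nat \<Rightarrow> 'a::banach"
  assumes "summable (\<lambda>n. norm (f (Suc n)))"
  shows "(f has_sum (\<Sum>n. f (Suc n))) {0<..}"
proof -
  have "bij_betw Suc UNIV {0<..}"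
    by (rule bij_betwI [where g = "\<lambda>n. n - 1"]) auto
  moreover have "((\<lambda>n. f (Suc n)) has_sum (\<Sum>n. f (Suc n))) UNIV"
    using assms by (intro norm_summable_imp_has_sum summable_sums [OF summable_norm_cancel])
  ultimately show ?thesis
    using has_sum_reindex_bij_betw by blast
qed

lemma summable_norm_Suc_if_le_powr:
  fixes f :: "nat \<Rightarrow> 'a::real_normed_vector"
  assumes "\<And>n. n > 0 \<Longrightarrow> norm (f n) \<le> real n powr \<sigma>" and "\<sigma> < -1"
  shows "summable (\<lambda>n. norm (f (Suc n)))"
proof (rule summable_comparison_test)
  show "\<exists>N. \<forall>n\<ge>N. norm (norm (f (Suc n))) \<le> real (Suc n) powr \<sigma>"
    by (intro exI [of _ 0] allI impI) (simp add: assms(1) del: of_nat_Suc)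
  show "summable (\<lambda>n. real (Suc n) powr \<sigma>)"
    using assms(2) by (subst summable_Suc_iff) (simp add: summable_real_powr_iff)
qed

lemma has_sum_zeta:
  assumes "1 < Re s"
  shows "((\<lambda>n. 1 / of_nat n powr s) has_sum zeta s) {0<..}"
proof -
  have "summable (\<lambda>n. norm (1 / (of_nat (Suc n) :: complex) powr s))"
    using assms by (intro summable_norm_Suc_if_le_powr [where \<sigma> = "- Re s"])
      (auto simp: norm_divide norm_of_nat_powr powr_minus_divide)
  then show ?thesis
    unfolding zeta_def by (rule norm_summable_Suc_imp_has_sum)
qed

lemma norm_zeta_minus_one_le:
  assumes "3 \<le> Re s"
  shows "norm (zeta s - 1) \<le> 1 / 2"
proof -
  define h :: "nat \<Rightarrow> complex" where "h n = 1 / of_nat n powr s" for n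
  have "(h has_sum zeta s) {0<..}"
    unfolding h_def using assms by (intro has_sum_zeta) simp
  then have h0: "h summable_on {0<..}" and zeta: "zeta s = infsum h {0<..}"
    by (simp_all add: has_sum_imp_summable infsumI)
  have h2: "h summable_on {2..}"
    by (rule summable_on_subset_banach [OF h0]) auto
  then have h2_norm: "(\<lambda>k. norm (h k)) summable_on {2..}"
    using summable_on_iff_abs_summable_on_complex by blast
  have "{0<..} = insert 1 {2::nat..}"
    by auto
  with h2 have "zeta s - 1 = infsum h {2..}"
    by (simp add: zeta infsum_insert h_def)
  also have "norm \<dots> \<le> infsum (\<lambda>k. norm (h k)) {2..}"
    by (rule norm_infsum_bound [OF h2_norm])
  also have "\<dots> \<le> 1 / 2"
  proof (rule infsum_le_finite_sums [OF h2_norm])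
    show "sum (\<lambda>k. norm (h k)) K \<le> 1 / 2" if "finite K" and "K \<subseteq> {2..}" for K
      using sum_powr_neg_le_half [OF that assms]
      by (simp add: h_def norm_divide norm_of_nat_powr powr_minus_divide)
  qed
  finally show ?thesis .
qed

lemma kappa_dirichlet_convolution:
  assumes "n > 0"
  shows "(\<Sum>d | d dvd n. kappa x d / of_nat d powr s * (1 / of_nat (n div d) powr s))
           = 2 * (kappa x n / of_nat n powr s) - 1 / of_nat n powr (s - x)"
proof -
  have "(\<Sum>d | d dvd n. kappa x d / of_nat d powr s * (1 / of_nat (n div d) powr s))
          = (\<Sum>d | d dvd n. kappa x d) / of_nat n powr s"
    unfolding sum_divide_distrib
  proof (intro sum.cong refl)
    fix d
    assume "d \<in> {d. d dvd n}"
    then obtain m where "n = d * m" and "d > 0" and "m > 0"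
      using assms by (auto elim!: dvdE)
    then show "kappa x d / of_nat d powr s * (1 / of_nat (n div d) powr s) = kappa x d / of_nat n powr s"
      by (simp add: powr_times_real)
  qed
  also have "\<dots> = 2 * (kappa x n / of_nat n powr s) - 1 / of_nat n powr (s - x)"
    using assms by (simp add: sum_divisors_kappa powr_diff field_simps)
  finally show ?thesis .
qed

lemma summable_norm_kappa_dirichlet_series:
  assumes "3 \<le> A" and "Re x + 1 \<le> A" and "A + 1 < Re s"
  shows "summable (\<lambda>n. norm (kappa x (Suc n) / of_nat (Suc n) powr s))"
proof (rule summable_norm_Suc_if_le_powr [where \<sigma> = "A - Re s"])
  show "norm (kappa x n / of_nat n powr s) \<le> real n powr (A - Re s)" for n
    using norm_kappa_le [OF assms(1,2), of n]
    by (simp add: norm_divide norm_of_nat_powr powr_diff divide_right_mono)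
next
  show "A - Re s < -1"
    using assms(3) by linarith
qed

lemma has_sum_kappa_dirichlet_series_eq:
  assumes K: "((\<lambda>n. kappa x n / of_nat n powr s) has_sum K) {0<..}"
    and s: "3 \<le> Re s" and sx: "1 < Re (s - x)"
  shows "K = zeta (s - x) / (2 - zeta s)"
proof -
  let ?a = "\<lambda>n. kappa x n / of_nat n powr s"
  let ?conv = "\<lambda>n. \<Sum>d | d dvd n. ?a d * (1 / of_nat (n div d) powr s)"
  have "(?conv has_sum K * zeta s) {0<..}"
    using K s by (intro has_sum_dirichlet_prod has_sum_zeta) simp_all
  moreover have "(?conv has_sum 2 * K + - zeta (s - x)) {0<..}"
  proof (subst has_sum_cong)
    show "?conv n = 2 * ?a n + - (1 / of_nat n powr (s - x))" if "n \<in> {0<..}" for n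
      using kappa_dirichlet_convolution [of n x s] that by simp
    show "((\<lambda>n. 2 * ?a n + - (1 / of_nat n powr (s - x))) has_sum 2 * K + - zeta (s - x)) {0<..}"
      using K sx by (intro has_sum_add has_sum_cmult_right has_sum_uminusI has_sum_zeta)
  qed
  ultimately have "K * zeta s = 2 * K + - zeta (s - x)"
    by (rule has_sum_unique)
  moreover have "zeta s \<noteq> 2"
  proof
    assume "zeta s = 2"
    with norm_zeta_minus_one_le [OF s] show False
      by simp
  qed
  ultimately show ?thesis
    by (simp add: field_simps)
qed

theorem theorem1:
  fixes x :: complex
  shows "\<exists>\<sigma>::real. \<forall>s::complex. Re s > \<sigma> \<longrightarrow>
           summable (\<lambda>n. norm (kappa x (Suc n) / of_nat (Suc n) powr s)) \<and>
           (\<Sum>n. kappa x (Suc n) / of_nat (Suc n) powr s) = zeta (s - x) / (2 - zeta s)"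
proof (intro exI [of _ "max 3 (Re x + 1) + 1"] allI impI conjI)
  fix s :: complex
  assume s: "max 3 (Re x + 1) + 1 < Re s"
  then show "summable (\<lambda>n. norm (kappa x (Suc n) / of_nat (Suc n) powr s))"
    by (intro summable_norm_kappa_dirichlet_series [of "max 3 (Re x + 1)"]) auto
  then have "((\<lambda>n. kappa x n / of_nat n powr s) has_sum (\<Sum>n. kappa x (Suc n) / of_nat (Suc n) powr s)) {0<..}"
    by (rule norm_summable_Suc_imp_has_sum)
  then show "(\<Sum>n. kappa x (Suc n) / of_nat (Suc n) powr s) = zeta (s - x) / (2 - zeta s)"
    using s by (intro has_sum_kappa_dirichlet_series_eq) auto
qed

end
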